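(* Let $w_k^A,w_k^B$ be the noise vectors associated with SDQ (see context), under the assumptions that rewards satisfy $|r(s,a,s')|\le1$, $\|Q_0^A\|_\infty,\|Q_0^B\|_\infty\le1$ and $\alpha\in(0,1)$. Then for all $k\ge0$, \[ \mathbb{E}\big[(w_k^A-w_k^B)^T(w_k^A-w_k^B)\big]\le\frac{16}{(1-\gamma)^2}. \]
   Context: Finite MDP with states $\mathcal{S}=\{1,\dots,|\mathcal{S}|\}$, actions $\mathcal{A}=\{1,\dots,|\mathcal{A}|\}$, transitions $P(s'|s,a)$, deterministic reward $r(s,a,s')$ with $|r|\le 1$, discount $\gamma\in(0,1)$. Sampling distribution $d(s,a)>0$ on $\mathcal{S}\times\mathcal{A}$; at iteration $k$, $(s_k,a_k)\sim d$ i.i.d., $s_k'\sim P(\cdot|s_k,a_k)$, $r_{k+1}=r(s_k,a_k,s_k')$. Constant step-size $\alpha\in(0,1)$. SDQ: only entry $(s_k,a_k)$ is updated, $Q_{k+1}^A(s_k,a_k)=Q_k^A(s_k,a_k)+\alpha\{r_{k+1}+\gamma Q_k^A(s_k',\arg\max_aQ_k^B(s_k',a))-Q_k^A(s_k,a_k)\}$ and symmetrically for $B$ with roles of $A,B$ swapped. Vector notation: $Q\in\mathbb{R}^{|\mathcal{S}||\mathcal{A}|}$ stacks $Q(\cdot,1),\dots,Q(\cdot,|\mathcal{A}|)$, so $Q(s,a)=(e_a\otimes e_s)^TQ$. $D$ is the diagonal matrix with entry $d(s,a)$ at position $(s,a)$. $P\in\mathbb{R}^{|\mathcal{S}||\mathcal{A}|\times|\mathcal{S}|}$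 has row $(s,a)$ equal to $P(\cdot|s,a)$. $R(s,a)=\mathbb{E}[r(s,a,s')|s,a]$. For $Q$, $\pi_Q(s)=\arg\max_aQ(s,a)$ (fixed tie-breaking) and $\Pi_Q\in\mathbb{R}^{|\mathcal{S}|\times|\mathcal{S}||\mathcal{A}|}$ has $s$-th row $e_{\pi_Q(s)}^T\otimes e_s^T$. Noise: $w_k^A=(e_{a_k}\otimes e_{s_k})r_{k+1}+\gamma(e_{a_k}\otimes e_{s_k})e_{s_k'}^T\Pi_{Q_k^B}Q_k^A-(e_{a_k}\otimes e_{s_k})(e_{a_k}\otimes e_{s_k})^TQ_k^A-(DR+\gamma DP\Pi_{Q_k^B}Q_k^A-DQ_k^A)$, and $w_k^B$ is the same with $A$ and $B$ swapped. *)

theory Defs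
  imports "HOL-Probability.Probability"
begin

text \<open>A greedy policy selector \<open>greedy Q s\<close> returns an action maximising \<open>Q(s,\<cdot>)\<close>
  (fixed tie-breaking rule, supplied as a parameter).\<close>

type_synonym ('s, 'a) qfun = "'s \<times> 'a \<Rightarrow> real"

definition is_greedy :: "(('s, 'a) qfun \<Rightarrow> 's \<Rightarrow> 'a) \<Rightarrow> bool" where
  "is_greedy greedy \<longleftrightarrow> (\<forall>Q s b. Q (s, b) \<le> Q (s, greedy Q s))"

definition sample_pmf :: "('s \<times> 'a) pmf \<Rightarrow> ('s \<Rightarrow> 'a \<Rightarrow> 's pmf) \<Rightarrow> ('s \<times> 'a \<times> 's) pmf" where
  "sample_pmf d P = bind_pmf d (\<lambda>(s, a). map_pmf (\<lambda>s'. (s, a, s')) (P s a))"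

definition sdq_step ::
  "real \<Rightarrow> real \<Rightarrow> ('s \<Rightarrow> 'a \<Rightarrow> 's \<Rightarrow> real) \<Rightarrow> (('s, 'a) qfun \<Rightarrow> 's \<Rightarrow> 'a)
   \<Rightarrow> ('s, 'a) qfun \<times> ('s, 'a) qfun \<Rightarrow> 's \<times> 'a \<times> 's \<Rightarrow> ('s, 'a) qfun \<times> ('s, 'a) qfun" where
  "sdq_step \<alpha> \<gamma> r greedy QQ \<xi> =
     (case QQ of (QA, QB) \<Rightarrow> case \<xi> of (s, a, s') \<Rightarrow>
       (QA((s, a) := QA (s, a) + \<alpha> * (r s a s' + \<gamma> * QA (s', greedy QB s') - QA (s, a))),
        QB((s, a) := QB (s, a) + \<alpha> * (r s a s' + \<gamma> * QB (s', greedy QA s') - QB (s, a)))))"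

primrec sdq_dist ::
  "('s \<times> 'a) pmf \<Rightarrow> ('s \<Rightarrow> 'a \<Rightarrow> 's pmf) \<Rightarrow> ('s \<Rightarrow> 'a \<Rightarrow> 's \<Rightarrow> real) \<Rightarrow> real \<Rightarrow> real
   \<Rightarrow> (('s, 'a) qfun \<Rightarrow> 's \<Rightarrow> 'a) \<Rightarrow> ('s, 'a) qfun \<Rightarrow> ('s, 'a) qfun \<Rightarrow> nat
   \<Rightarrow> (('s, 'a) qfun \<times> ('s, 'a) qfun) pmf" where
  "sdq_dist d P r \<alpha> \<gamma> greedy QA0 QB0 0 = return_pmf (QA0, QB0)"
| "sdq_dist d P r \<alpha> \<gamma> greedy QA0 QB0 (Suc k) =
     bind_pmf (sdq_dist d P r \<alpha> \<gamma> greedy QA0 QB0 k)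
       (\<lambda>QQ. map_pmf (sdq_step \<alpha> \<gamma> r greedy QQ) (sample_pmf d P))"

definition Rexp :: "('s \<Rightarrow> 'a \<Rightarrow> 's pmf) \<Rightarrow> ('s \<Rightarrow> 'a \<Rightarrow> 's \<Rightarrow> real) \<Rightarrow> 's \<times> 'a \<Rightarrow> real" where
  "Rexp P r x = (case x of (s, a) \<Rightarrow> measure_pmf.expectation (P s a) (r s a))"

text \<open>Noise vector \<open>w^A\<close> for tables \<open>QA\<close> (evaluated) and \<open>QB\<close> (selecting the greedy
  action) and sample \<open>(s,a,s')\<close>, written componentwise:
  \<open>e_{(s,a)} (r + \<gamma> QA(s',\<pi>_{QB}(s')) - QA(s,a)) - (DR + \<gamma> D P \<Pi>_{QB} QA - D QA)\<close>.
  \<open>w^B\<close> is \<open>sdq_noise \<dots> QB QA \<xi>\<close>.\<close>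
definition sdq_noise ::
  "('s \<times> 'a) pmf \<Rightarrow> ('s \<Rightarrow> 'a \<Rightarrow> 's pmf) \<Rightarrow> ('s \<Rightarrow> 'a \<Rightarrow> 's \<Rightarrow> real) \<Rightarrow> real
   \<Rightarrow> (('s, 'a) qfun \<Rightarrow> 's \<Rightarrow> 'a) \<Rightarrow> ('s, 'a) qfun \<Rightarrow> ('s, 'a) qfun \<Rightarrow> 's \<times> 'a \<times> 's
   \<Rightarrow> ('s, 'a) qfun" where
  "sdq_noise d P r \<gamma> greedy QA QB \<xi> = (\<lambda>x.
     (case \<xi> of (s, a, s') \<Rightarrow>
        (if x = (s, a) then r s a s' + \<gamma> * QA (s', greedy QB s') - QA (s, a) else 0))
     - pmf d x * (Rexp P r x
                  + \<gamma> * measure_pmf.expectation (P (fst x) (snd x)) (\<lambda>s'. QA (s', greedy QB s'))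
                  - QA x))"

end

theory Submission
  imports Defs
begin

text \<open>The rewards cancel in \<open>w\<^sup>A - w\<^sup>B\<close>, which is therefore \<open>Z - E Z\<close> for the random vector
  \<open>Z = \<delta> e\<^bsub>(s,a)\<^esub>\<close>, where \<open>\<delta>\<close> is the difference of the reward-free temporal-difference errors
  of the two tables at the sample. Since a variance is at most the second moment,
  \<open>E \<parallel>w\<^sup>A - w\<^sup>B\<parallel>\<^sup>2 \<le> E \<parallel>Z\<parallel>\<^sup>2 = E \<delta>\<^sup>2\<close>. Each SDQ update replaces one entry by a convex combination of
  itself and \<open>r + \<gamma> Q(s', \<cdot>)\<close>, so the bound \<open>\<bar>Q\<bar> \<le> M = 1 / (1 - \<gamma>)\<close> is invariant because
  \<open>1 + \<gamma> M = M\<close>; hence \<open>\<bar>\<delta>\<bar> \<le> 4 M\<close>.\<close>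

lemma (in prob_space) expectation_sum_centered_sq_le:
  fixes Z :: "'i \<Rightarrow> 'a \<Rightarrow> real"
  assumes "finite I"
    and int: "\<And>i. i \<in> I \<Longrightarrow> integrable M (Z i)"
    and int_sq: "\<And>i. i \<in> I \<Longrightarrow> integrable M (\<lambda>x. (Z i x)\<^sup>2)"
  shows "expectation (\<lambda>x. \<Sum>i\<in>I. (Z i x - expectation (Z i))\<^sup>2)
       \<le> expectation (\<lambda>x. \<Sum>i\<in>I. (Z i x)\<^sup>2)"
proof -
  have "expectation (\<lambda>x. \<Sum>i\<in>I. (Z i x - expectation (Z i))\<^sup>2) = (\<Sum>i\<in>I. variance (Z i))"
  proof (rule Bochner_Integration.integral_sum)
    fix i assume "i \<in> I"
    then show "integrable M (\<lambda>x. (Z i x - expectation (Z i))\<^sup>2)"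
      using int int_sq by (simp add: power2_diff)
  qed
  also have "\<dots> = (\<Sum>i\<in>I. expectation (\<lambda>x. (Z i x)\<^sup>2) - (expectation (Z i))\<^sup>2)"
    using int int_sq by (intro sum.cong refl variance_eq)
  also have "\<dots> \<le> (\<Sum>i\<in>I. expectation (\<lambda>x. (Z i x)\<^sup>2))"
    by (intro sum_mono) simp
  also have "\<dots> = expectation (\<lambda>x. \<Sum>i\<in>I. (Z i x)\<^sup>2)"
    using int_sq by (intro Bochner_Integration.integral_sum[symmetric]) auto
  finally show ?thesis .
qed

lemma expectation_pair_pmf_le_const:
  fixes f :: "'a \<times> 'b \<Rightarrow> real"
  assumes "finite (set_pmf p)" "finite (set_pmf q)"
    and bound: "\<And>x. x \<in> set_pmf p \<Longrightarrow> measure_pmf.expectation q (\<lambda>y. f (x, y)) \<le> c"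
  shows "measure_pmf.expectation (pair_pmf p q) f \<le> c"
proof -
  have "measure_pmf.expectation (pair_pmf p q) f
      = (\<Sum>x\<in>set_pmf p. pmf p x * measure_pmf.expectation (map_pmf (Pair x) q) f)"
    unfolding pair_pmf_def map_pmf_def[symmetric]
    using assms by (subst pmf_expectation_bind[where A = "set_pmf p"]) auto
  also have "\<dots> \<le> (\<Sum>x\<in>set_pmf p. pmf p x * c)"
    using bound by (intro sum_mono mult_left_mono) auto
  also have "\<dots> = c"
    using assms by (simp add: sum_distrib_right[symmetric] sum_pmf_eq_1)
  finally show ?thesis .
qed

lemma expectation_sample_pmf:
  fixes d :: "('s::finite \<times> 'a::finite) pmf" and g :: "'s \<times> 'a \<times> 's \<Rightarrow> real"
  shows "measure_pmf.expectation (sample_pmf d P) g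
       = (\<Sum>(s, a)\<in>UNIV. pmf d (s, a) * measure_pmf.expectation (P s a) (\<lambda>s'. g (s, a, s')))"
  unfolding sample_pmf_def
  by (subst pmf_expectation_bind[where A = UNIV]) (auto intro!: sum.cong)

definition td_gap ::
  "real \<Rightarrow> (('s, 'a) qfun \<Rightarrow> 's \<Rightarrow> 'a) \<Rightarrow> ('s, 'a) qfun \<Rightarrow> ('s, 'a) qfun \<Rightarrow> 's \<times> 'a \<times> 's \<Rightarrow> real" where
  "td_gap \<gamma> greedy QA QB \<xi> = (case \<xi> of (s, a, s') \<Rightarrow>
      \<gamma> * QA (s', greedy QB s') - QA (s, a) - (\<gamma> * QB (s', greedy QA s') - QB (s, a)))"

definition td_gap_vec ::
  "real \<Rightarrow> (('s, 'a) qfun \<Rightarrow> 's \<Rightarrow> 'a) \<Rightarrow> ('s, 'a) qfun \<Rightarrow> ('s, 'a) qfun \<Rightarrow> 's \<times> 'a \<times> 's \<Rightarrow> ('s, 'a) qfun" where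
  "td_gap_vec \<gamma> greedy QA QB \<xi> x =
     (if x = (fst \<xi>, fst (snd \<xi>)) then td_gap \<gamma> greedy QA QB \<xi> else 0)"

lemma sum_td_gap_vec_sq:
  fixes QA QB :: "('s::finite, 'a::finite) qfun"
  shows "(\<Sum>x\<in>UNIV. (td_gap_vec \<gamma> greedy QA QB \<xi> x)\<^sup>2) = (td_gap \<gamma> greedy QA QB \<xi>)\<^sup>2"
  unfolding td_gap_vec_def by (simp add: if_distrib[of "\<lambda>t. t\<^sup>2"] cong: if_cong)

lemma expectation_td_gap_vec:
  fixes d :: "('s::finite \<times> 'a::finite) pmf" and P :: "'s \<Rightarrow> 'a \<Rightarrow> 's pmf"
  shows "measure_pmf.expectation (sample_pmf d P) (\<lambda>\<xi>. td_gap_vec \<gamma> greedy QA QB \<xi> (s, a))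
       = pmf d (s, a) * (\<gamma> * measure_pmf.expectation (P s a) (\<lambda>s'. QA (s', greedy QB s')) - QA (s, a)
           - (\<gamma> * measure_pmf.expectation (P s a) (\<lambda>s'. QB (s', greedy QA s')) - QB (s, a)))"
proof -
  have "measure_pmf.expectation (sample_pmf d P) (\<lambda>\<xi>. td_gap_vec \<gamma> greedy QA QB \<xi> (s, a))
      = (\<Sum>y\<in>UNIV. if (s, a) = y
           then pmf d y * measure_pmf.expectation (P s a) (\<lambda>s'. td_gap \<gamma> greedy QA QB (s, a, s'))
           else 0)"
    unfolding expectation_sample_pmf td_gap_vec_def by (intro sum.cong refl) (auto split: prod.split)
  also have "\<dots> = pmf d (s, a) * measure_pmf.expectation (P s a) (\<lambda>s'. td_gap \<gamma> greedy QA QB (s, a, s'))"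
    by simp
  finally show ?thesis
    by (simp add: td_gap_def integrable_measure_pmf_finite measure_pmf.prob_space)
qed

lemma sdq_noise_diff_eq:
  fixes d :: "('s::finite \<times> 'a::finite) pmf" and P :: "'s \<Rightarrow> 'a \<Rightarrow> 's pmf"
  shows "sdq_noise d P r \<gamma> greedy QA QB \<xi> x - sdq_noise d P r \<gamma> greedy QB QA \<xi> x
       = td_gap_vec \<gamma> greedy QA QB \<xi> x
         - measure_pmf.expectation (sample_pmf d P) (\<lambda>\<xi>. td_gap_vec \<gamma> greedy QA QB \<xi> x)"
proof -
  obtain s a where x: "x = (s, a)" by (cases x)
  show ?thesis
    unfolding x expectation_td_gap_vec
    by (cases \<xi>) (simp add: sdq_noise_def Rexp_def td_gap_vec_def td_gap_def algebra_simps)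
qed

lemma abs_td_gap_le:
  fixes QA QB :: "('s, 'a) qfun"
  assumes QA: "\<And>x. \<bar>QA x\<bar> \<le> M" and QB: "\<And>x. \<bar>QB x\<bar> \<le> M" and "0 \<le> \<gamma>" "\<gamma> \<le> 1"
  shows "\<bar>td_gap \<gamma> greedy QA QB \<xi>\<bar> \<le> 4 * M"
proof -
  obtain s a s' where \<xi>: "\<xi> = (s, a, s')" by (cases \<xi>)
  have discounted: "\<bar>\<gamma> * Q y\<bar> \<le> M" if "\<And>x. \<bar>Q x\<bar> \<le> M" for Q :: "('s, 'a) qfun" and y
    using that[of y] mult_left_le_one_le[of "\<bar>Q y\<bar>" \<gamma>] \<open>0 \<le> \<gamma>\<close> \<open>\<gamma> \<le> 1\<close>
    by (simp add: abs_mult)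
  show ?thesis
    using discounted[of QA "(s', greedy QB s')", OF QA] discounted[of QB "(s', greedy QA s')", OF QB]
      QA[of "(s, a)"] QB[of "(s, a)"]
    unfolding \<xi> td_gap_def by simp
qed

lemma expectation_sdq_noise_diff_le:
  fixes d :: "('s::finite \<times> 'a::finite) pmf" and P :: "'s \<Rightarrow> 'a \<Rightarrow> 's pmf"
  assumes QA: "\<And>x. \<bar>QA x\<bar> \<le> M" and QB: "\<And>x. \<bar>QB x\<bar> \<le> M" and "0 \<le> \<gamma>" "\<gamma> \<le> 1"
  shows "measure_pmf.expectation (sample_pmf d P)
           (\<lambda>\<xi>. \<Sum>x\<in>UNIV. (sdq_noise d P r \<gamma> greedy QA QB \<xi> x - sdq_noise d P r \<gamma> greedy QB QA \<xi> x)\<^sup>2)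
         \<le> 16 * M\<^sup>2"
proof -
  let ?q = "sample_pmf d P"
  let ?Z = "\<lambda>x \<xi>. td_gap_vec \<gamma> greedy QA QB \<xi> x"
  have "measure_pmf.expectation ?q
           (\<lambda>\<xi>. \<Sum>x\<in>UNIV. (sdq_noise d P r \<gamma> greedy QA QB \<xi> x - sdq_noise d P r \<gamma> greedy QB QA \<xi> x)\<^sup>2)
      = measure_pmf.expectation ?q (\<lambda>\<xi>. \<Sum>x\<in>UNIV. (?Z x \<xi> - measure_pmf.expectation ?q (?Z x))\<^sup>2)"
    by (simp only: sdq_noise_diff_eq)
  also have "\<dots> \<le> measure_pmf.expectation ?q (\<lambda>\<xi>. \<Sum>x\<in>UNIV. (?Z x \<xi>)\<^sup>2)"
    by (rule measure_pmf.expectation_sum_centered_sq_le) (auto intro: integrable_measure_pmf_finite)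
  also have "\<dots> = measure_pmf.expectation ?q (\<lambda>\<xi>. (td_gap \<gamma> greedy QA QB \<xi>)\<^sup>2)"
    by (simp only: sum_td_gap_vec_sq)
  also have "\<dots> \<le> (4 * M)\<^sup>2"
  proof (rule measure_pmf.integral_le_const)
    show "AE \<xi> in ?q. (td_gap \<gamma> greedy QA QB \<xi>)\<^sup>2 \<le> (4 * M)\<^sup>2"
    proof (rule AE_I2)
      fix \<xi>
      have "\<bar>td_gap \<gamma> greedy QA QB \<xi>\<bar>\<^sup>2 \<le> (4 * M)\<^sup>2"
        using abs_td_gap_le[where QA = QA and QB = QB, OF QA QB assms(3,4)] by (intro power_mono) auto
      then show "(td_gap \<gamma> greedy QA QB \<xi>)\<^sup>2 \<le> (4 * M)\<^sup>2" by simp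
    qed
  qed (auto intro: integrable_measure_pmf_finite)
  finally show ?thesis by simp
qed

lemma abs_convex_update_le:
  fixes q v \<alpha> M :: real
  assumes "\<bar>q\<bar> \<le> M" "\<bar>v\<bar> \<le> M" "0 \<le> \<alpha>" "\<alpha> \<le> 1"
  shows "\<bar>q + \<alpha> * (v - q)\<bar> \<le> M"
proof -
  have "\<bar>q + \<alpha> * (v - q)\<bar> = \<bar>(1 - \<alpha>) * q + \<alpha> * v\<bar>"
    by (simp add: algebra_simps)
  also have "\<dots> \<le> (1 - \<alpha>) * \<bar>q\<bar> + \<alpha> * \<bar>v\<bar>"
    using assms by (metis abs_mult abs_of_nonneg abs_triangle_ineq diff_ge_0_iff_ge)
  also have "\<dots> \<le> (1 - \<alpha>) * M + \<alpha> * M"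
    using assms by (intro add_mono mult_left_mono) auto
  finally show ?thesis by (simp add: algebra_simps)
qed

lemma sdq_step_bounded:
  fixes QA QB :: "('s, 'a) qfun"
  assumes step: "sdq_step \<alpha> \<gamma> r greedy (QA, QB) \<xi> = (QA', QB')"
    and QA: "\<And>x. \<bar>QA x\<bar> \<le> M" and QB: "\<And>x. \<bar>QB x\<bar> \<le> M"
    and r: "\<And>s a s'. \<bar>r s a s'\<bar> \<le> 1" and "0 \<le> \<alpha>" "\<alpha> \<le> 1" "0 \<le> \<gamma>"
    and M: "1 + \<gamma> * M \<le> M"
  shows "\<bar>QA' x\<bar> \<le> M \<and> \<bar>QB' x\<bar> \<le> M"
proof -
  obtain s a s' where \<xi>: "\<xi> = (s, a, s')" by (cases \<xi>)
  have target: "\<bar>r s a s' + \<gamma> * Q y\<bar> \<le> M" if "\<And>x. \<bar>Q x\<bar> \<le> M" for Q :: "('s, 'a) qfun" and y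
  proof -
    have "\<bar>\<gamma> * Q y\<bar> \<le> \<gamma> * M"
      using that[of y] \<open>0 \<le> \<gamma>\<close> by (simp add: abs_mult mult_left_mono)
    then show ?thesis using r[of s a s'] M by linarith
  qed
  have "QA' = QA((s, a) := QA (s, a) + \<alpha> * (r s a s' + \<gamma> * QA (s', greedy QB s') - QA (s, a)))"
    and "QB' = QB((s, a) := QB (s, a) + \<alpha> * (r s a s' + \<gamma> * QB (s', greedy QA s') - QB (s, a)))"
    using step unfolding \<xi> sdq_step_def by auto
  then show ?thesis
    using QA[of x] QB[of x]
      abs_convex_update_le[OF QA target[of QA "(s', greedy QB s')", OF QA] \<open>0 \<le> \<alpha>\<close> \<open>\<alpha> \<le> 1\<close>]
      abs_convex_update_le[OF QB target[of QB "(s', greedy QA s')", OF QB] \<open>0 \<le> \<alpha>\<close> \<open>\<alpha> \<le> 1\<close>]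
    by simp
qed

lemma sdq_dist_bounded:
  assumes QA0: "\<And>x. \<bar>QA0 x\<bar> \<le> M" and QB0: "\<And>x. \<bar>QB0 x\<bar> \<le> M"
    and r: "\<And>s a s'. \<bar>r s a s'\<bar> \<le> 1" and \<alpha>: "0 \<le> \<alpha>" "\<alpha> \<le> 1" and \<gamma>: "0 \<le> \<gamma>"
    and M: "1 + \<gamma> * M \<le> M"
  shows "(QA, QB) \<in> set_pmf (sdq_dist d P r \<alpha> \<gamma> greedy QA0 QB0 k) \<Longrightarrow> \<bar>QA x\<bar> \<le> M \<and> \<bar>QB x\<bar> \<le> M"
proof (induction k arbitrary: QA QB x)
  case 0
  then show ?case using QA0 QB0 by simp
next
  case (Suc k)
  then obtain QA\<^sub>k QB\<^sub>k \<xi> where "(QA\<^sub>k, QB\<^sub>k) \<in> set_pmf (sdq_dist d P r \<alpha> \<gamma> greedy QA0 QB0 k)"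
    and step: "sdq_step \<alpha> \<gamma> r greedy (QA\<^sub>k, QB\<^sub>k) \<xi> = (QA, QB)"
    by (auto simp: set_bind_pmf)
  with Suc.IH have "\<And>x. \<bar>QA\<^sub>k x\<bar> \<le> M" "\<And>x. \<bar>QB\<^sub>k x\<bar> \<le> M" by blast+
  with sdq_step_bounded[OF step _ _ r \<alpha> \<gamma> M] show ?case by blast
qed

lemma finite_set_pmf_sdq_dist:
  fixes d :: "('s::finite \<times> 'a::finite) pmf"
  shows "finite (set_pmf (sdq_dist d P r \<alpha> \<gamma> greedy QA0 QB0 k))"
  by (induction k) (auto simp: set_bind_pmf)

theorem lemma6:
  fixes d :: "('s::finite \<times> 'a::finite) pmf"
    and P :: "'s \<Rightarrow> 'a \<Rightarrow> 's pmf"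
    and r :: "'s \<Rightarrow> 'a \<Rightarrow> 's \<Rightarrow> real"
    and \<alpha> \<gamma> :: real
    and greedy :: "('s, 'a) qfun \<Rightarrow> 's \<Rightarrow> 'a"
    and QA0 QB0 :: "('s, 'a) qfun"
    and k :: nat
  assumes d_pos: "\<And>x. pmf d x > 0"
    and r_bound: "\<And>s a s'. \<bar>r s a s'\<bar> \<le> 1"
    and gamma: "0 < \<gamma>" "\<gamma> < 1"
    and alpha: "0 < \<alpha>" "\<alpha> < 1"
    and greedy: "is_greedy greedy"
    and QA0_bound: "\<And>x. \<bar>QA0 x\<bar> \<le> 1"
    and QB0_bound: "\<And>x. \<bar>QB0 x\<bar> \<le> 1"
  shows "measure_pmf.expectation
           (pair_pmf (sdq_dist d P r \<alpha> \<gamma> greedy QA0 QB0 k) (sample_pmf d P))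
           (\<lambda>(QQ, \<xi>). \<Sum>x\<in>UNIV.
              (sdq_noise d P r \<gamma> greedy (fst QQ) (snd QQ) \<xi> x
               - sdq_noise d P r \<gamma> greedy (snd QQ) (fst QQ) \<xi> x)\<^sup>2)
         \<le> 16 / (1 - \<gamma>)\<^sup>2"
proof -
  define M where "M = 1 / (1 - \<gamma>)"
  have "1 \<le> M" and M: "1 + \<gamma> * M \<le> M"
    using gamma by (simp_all add: M_def field_simps)
  then have QA0: "\<And>x. \<bar>QA0 x\<bar> \<le> M" and QB0: "\<And>x. \<bar>QB0 x\<bar> \<le> M"
    using QA0_bound QB0_bound by (meson order_trans)+
  have bounded: "\<bar>QA x\<bar> \<le> M \<and> \<bar>QB x\<bar> \<le> M"
    if "(QA, QB) \<in> set_pmf (sdq_dist d P r \<alpha> \<gamma> greedy QA0 QB0 k)" for QA QB x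
    using sdq_dist_bounded[of QA0 M QB0 r \<alpha> \<gamma>, OF QA0 QB0 r_bound _ _ _ M that] alpha gamma
    by simp
  have "measure_pmf.expectation
           (pair_pmf (sdq_dist d P r \<alpha> \<gamma> greedy QA0 QB0 k) (sample_pmf d P))
           (\<lambda>(QQ, \<xi>). \<Sum>x\<in>UNIV.
              (sdq_noise d P r \<gamma> greedy (fst QQ) (snd QQ) \<xi> x
               - sdq_noise d P r \<gamma> greedy (snd QQ) (fst QQ) \<xi> x)\<^sup>2)
         \<le> 16 * M\<^sup>2"
    using gamma bounded
    by (intro expectation_pair_pmf_le_const)
       (auto simp: finite_set_pmf_sdq_dist intro!: expectation_sdq_noise_diff_le)
  then show ?thesis by (simp add: M_def power_divide)
qed

end
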